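(* Let $\Gamma$ and $A_k(q)$ be as below. For every prime $p\ge5$ and every positive integer $m$, $A_{54}(p^m)=\Gamma/\Gamma(p^m)$.
   Context: Here $\sqrt{2}i=\sqrt{-2}$ and $M_1=\begin{pmatrix}1&2\\-2&-3\end{pmatrix}$, $M_2=\begin{pmatrix}1-2\sqrt2 i&2\\2+4\sqrt2 i&-3+2\sqrt2 i\end{pmatrix}$, $M_3=\begin{pmatrix}1&0\\-4&1\end{pmatrix}$, $M_4=\begin{pmatrix}-1+2\sqrt2 i&-4\\-4\sqrt2 i&7-2\sqrt2 i\end{pmatrix}$, $M_5=\begin{pmatrix}-1&2\\2&-5\end{pmatrix}$, $M_6=\begin{pmatrix}1+2\sqrt2 i&-2\\-6-4\sqrt2 i&5-2\sqrt2 i\end{pmatrix}$, $M_7=\begin{pmatrix}-1-2\sqrt2 i&4\\4+4\sqrt2 i&-9+2\sqrt2 i\end{pmatrix}$. $\Gamma=\langle M_1,\dots,M_7\rangle\subset SL(2,\mathbb{Z}[\sqrt2 i])$; $\Gamma_{C_3}=\langle M_1,M_3,M_5\rangle$, $\Gamma_{C_1}=\langle M_2,M_3,M_6\rangle$, $\Gamma_{C_{3'}}=\langle M_7^{-1}M_3,M_7^{-1}M_5,M_7^{-1}M_6\rangle$. $\Gamma(q)$ is the set of $\gamma\in\Gamma$ with $\gamma\equiv I\pmod{q\mathbb{Z}[\sqrt2 i]}$, and $\Gamma/\Gamma(q)$ is identified with the image of $\Gamma$ in $SL(2,\mathbb{Z}[\sqrt2 i]/(q))$. For $k\ge1$, $A_k(q)$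 is the set of reductions modulo $q$ of all products $g_1h_1j_1\cdots g_kh_kj_k$ with $g_l\in\Gamma_{C_3}$, $h_l\in\Gamma_{C_1}$, $j_l\in\Gamma_{C_{3'}}$. *)

theory Defs
  imports Main "HOL-Computational_Algebra.Primes"
begin

text \<open>Elements of Z[sqrt(-2)]: the pair (a, b) stands for a + b * sqrt(-2).\<close>
type_synonym zs2 = "int \<times> int"

definition zadd :: "zs2 \<Rightarrow> zs2 \<Rightarrow> zs2" where
  "zadd x y = (fst x + fst y, snd x + snd y)"

definition zmul :: "zs2 \<Rightarrow> zs2 \<Rightarrow> zs2" where
  "zmul x y = (fst x * fst y - 2 * snd x * snd y, fst x * snd y + snd x * fst y)"

definition zneg :: "zs2 \<Rightarrow> zs2" where
  "zneg x = (- fst x, - snd x)"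

text \<open>Reduction modulo the ideal q Z[sqrt(-2)] (q a rational integer):
  a + b sqrt(-2) is in q Z[sqrt(-2)] iff q divides a and b, so canonical
  representatives are obtained componentwise.\<close>
definition zred :: "int \<Rightarrow> zs2 \<Rightarrow> zs2" where
  "zred q x = (fst x mod q, snd x mod q)"

datatype mat2 = Mat zs2 zs2 zs2 zs2

fun mmul :: "mat2 \<Rightarrow> mat2 \<Rightarrow> mat2" where
  "mmul (Mat a b c d) (Mat e f g h) =
     Mat (zadd (zmul a e) (zmul b g)) (zadd (zmul a f) (zmul b h))
         (zadd (zmul c e) (zmul d g)) (zadd (zmul c f) (zmul d h))"

text \<open>Inverse of a matrix of determinant 1 (all matrices considered lie in SL2).\<close>
fun minv :: "mat2 \<Rightarrow> mat2" where
  "minv (Mat a b c d) = Mat d (zneg b) (zneg c) a"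

definition mI :: mat2 where
  "mI = Mat (1, 0) (0, 0) (0, 0) (1, 0)"

fun mred :: "int \<Rightarrow> mat2 \<Rightarrow> mat2" where
  "mred q (Mat a b c d) = Mat (zred q a) (zred q b) (zred q c) (zred q d)"

inductive_set gen :: "mat2 set \<Rightarrow> mat2 set" for S :: "mat2 set" where
  gen_one: "mI \<in> gen S"
| gen_mul: "s \<in> S \<Longrightarrow> x \<in> gen S \<Longrightarrow> mmul s x \<in> gen S"
| gen_inv: "s \<in> S \<Longrightarrow> x \<in> gen S \<Longrightarrow> mmul (minv s) x \<in> gen S"

definition M1 :: mat2 where "M1 = Mat (1, 0) (2, 0) (-2, 0) (-3, 0)"
definition M2 :: mat2 where "M2 = Mat (1, -2) (2, 0) (2, 4) (-3, 2)"
definition M3 :: mat2 where "M3 = Mat (1, 0) (0, 0) (-4, 0) (1, 0)"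
definition M4 :: mat2 where "M4 = Mat (-1, 2) (-4, 0) (0, -4) (7, -2)"
definition M5 :: mat2 where "M5 = Mat (-1, 0) (2, 0) (2, 0) (-5, 0)"
definition M6 :: mat2 where "M6 = Mat (1, 2) (-2, 0) (-6, -4) (5, -2)"
definition M7 :: mat2 where "M7 = Mat (-1, -2) (4, 0) (4, 4) (-9, 2)"

definition Gamma :: "mat2 set" where
  "Gamma = gen {M1, M2, M3, M4, M5, M6, M7}"

definition Gamma_C3 :: "mat2 set" where
  "Gamma_C3 = gen {M1, M3, M5}"

definition Gamma_C1 :: "mat2 set" where
  "Gamma_C1 = gen {M2, M3, M6}"

definition Gamma_C3' :: "mat2 set" where
  "Gamma_C3' = gen {mmul (minv M7) M3, mmul (minv M7) M5, mmul (minv M7) M6}"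

fun blocks :: "nat \<Rightarrow> mat2 set" where
  "blocks 0 = {mI}"
| "blocks (Suc k) = {mmul (mmul (mmul g h) j) x | g h j x.
      g \<in> Gamma_C3 \<and> h \<in> Gamma_C1 \<and> j \<in> Gamma_C3' \<and> x \<in> blocks k}"

definition A :: "nat \<Rightarrow> int \<Rightarrow> mat2 set" where
  "A k q = mred q ` blocks k"

text \<open>Gamma / Gamma(q), identified with the image of Gamma modulo q.\<close>
definition Gamma_quot :: "int \<Rightarrow> mat2 set" where
  "Gamma_quot q = mred q ` Gamma"

end

(* Because 8 and -4 are
   units modulo q, powers of the words (M5^-1 M1)^2 = upper 8 and M3 = lower (-4) give, modulo q,
   every unipotent matrix with a rational integer entry inside Gamma_C3, hence also every
   diag(u, u^-1) with u a rational unit; Gamma_C1 contains the same after conjugation by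
   lower (sqrt(-2)).  A product diag * (conjugated diag) * diag taken from Gamma_C3 Gamma_C1 Gamma_C3
   is congruent to lower (sqrt(-2) (a^2 - b^2)) for units a, b; as k = ((k+1)/2)^2 - ((k-1)/2)^2,
   this reaches every lower (sqrt(-2) k) in 3 blocks, or in 6 when k = +-1 modulo p (split k in
   halves).  So every lower unipotent lies in 7 blocks and, after conjugating by the Weyl element,
   every upper unipotent in 9.  Finally one of a, a + c, a + 2c has norm prime to p, so after a
   row operation any matrix of determinant 1 is lower * diag * upper modulo q, which costs at
   most 43 <= 54 blocks. *)

theory Submission
  imports Defs "HOL-Number_Theory.Cong"
begin

definition modeq :: "'a::comm_ring_1 \<Rightarrow> 'a \<Rightarrow> 'a \<Rightarrow> bool" where
  "modeq c x y \<longleftrightarrow> c dvd x - y"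

lemma modeq_refl [simp]: "modeq c x x"
  by (simp add: modeq_def)

lemma modeq_sym: "modeq c x y \<Longrightarrow> modeq c y x"
  by (metis dvd_minus_iff minus_diff_eq modeq_def)

lemma modeq_trans [trans]: "modeq c x y \<Longrightarrow> modeq c y z \<Longrightarrow> modeq c x z"
  unfolding modeq_def using dvd_add by fastforce

lemma modeq_add: "modeq c x y \<Longrightarrow> modeq c x' y' \<Longrightarrow> modeq c (x + x') (y + y')"
  unfolding modeq_def using dvd_add[of c "x - y" "x' - y'"] by (simp add: algebra_simps)

lemma modeq_diff: "modeq c x y \<Longrightarrow> modeq c x' y' \<Longrightarrow> modeq c (x - x') (y - y')"
  unfolding modeq_def using dvd_diff[of c "x - y" "x' - y'"] by (simp add: algebra_simps)

lemma modeq_mult: "modeq c x y \<Longrightarrow> modeq c x' y' \<Longrightarrow> modeq c (x * x') (y * y')"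
proof -
  assume "modeq c x y" "modeq c x' y'"
  moreover have "x * x' - y * y' = x * (x' - y') + (x - y) * y'"
    by (simp add: algebra_simps)
  ultimately show ?thesis
    unfolding modeq_def by (metis dvd_add dvd_mult dvd_mult2)
qed

lemma of_int_dvd_of_int: "p dvd n \<Longrightarrow> of_int p dvd (of_int n :: 'a::comm_ring_1)"
  by (metis of_int_mult dvd_def)

lemma modeq_of_int: "modeq q x y \<Longrightarrow> modeq (of_int q) (of_int x) (of_int y)"
  unfolding modeq_def by (metis of_int_diff of_int_dvd_of_int)

datatype 'a mat22 = Mat22 'a 'a 'a 'a

instantiation mat22 :: (comm_ring_1) monoid_mult
begin

fun times_mat22 :: "'a mat22 \<Rightarrow> 'a mat22 \<Rightarrow> 'a mat22" where
  "times_mat22 (Mat22 a b c d) (Mat22 e f g h) = Mat22 (a*e + b*g) (a*f + b*h) (c*e + d*g) (c*f + d*h)"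

definition one_mat22 :: "'a mat22" where
  "one_mat22 = Mat22 1 0 0 1"

instance
proof
  fix X Y Z :: "'a mat22"
  show "X * Y * Z = X * (Y * Z)"
    by (cases X; cases Y; cases Z) (simp add: algebra_simps)
  show "1 * X = X" "X * 1 = X"
    by (cases X; simp add: one_mat22_def)+
qed

end

fun det2 :: "'a::comm_ring_1 mat22 \<Rightarrow> 'a" where
  "det2 (Mat22 a b c d) = a * d - b * c"

fun adj2 :: "'a::comm_ring_1 mat22 \<Rightarrow> 'a mat22" where
  "adj2 (Mat22 a b c d) = Mat22 d (- b) (- c) a"

lemma det2_mult: "det2 (X * Y) = det2 X * det2 Y"
  by (cases X; cases Y) (simp add: algebra_simps)

lemma det2_adj2: "det2 (adj2 X) = det2 X"
  by (cases X) (simp add: algebra_simps)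

lemma det2_one [simp]: "det2 1 = 1"
  by (simp add: one_mat22_def)

lemma adj2_mult: "adj2 (X * Y) = adj2 Y * adj2 X"
  by (cases X; cases Y) (simp add: algebra_simps)

lemma adj2_adj2 [simp]: "adj2 (adj2 X) = X"
  by (cases X) simp

fun mat_modeq :: "'a::comm_ring_1 \<Rightarrow> 'a mat22 \<Rightarrow> 'a mat22 \<Rightarrow> bool" where
  "mat_modeq e (Mat22 a b c d) (Mat22 a' b' c' d') \<longleftrightarrow>
     modeq e a a' \<and> modeq e b b' \<and> modeq e c c' \<and> modeq e d d'"

lemma mat_modeq_refl [simp]: "mat_modeq e X X"
  by (cases X) simp

lemma mat_modeq_trans: "mat_modeq e X Y \<Longrightarrow> mat_modeq e Y Z \<Longrightarrow> mat_modeq e X Z"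
  by (cases X; cases Y; cases Z) (auto intro: modeq_trans)

lemma mat_modeq_mult:
  "mat_modeq e X Y \<Longrightarrow> mat_modeq e X' Y' \<Longrightarrow> mat_modeq e (X * X') (Y * Y')"
  by (cases X; cases Y; cases X'; cases Y') (auto intro!: modeq_add modeq_mult)

definition upper :: "'a::comm_ring_1 \<Rightarrow> 'a mat22" where
  "upper x = Mat22 1 x 0 1"

definition lower :: "'a::comm_ring_1 \<Rightarrow> 'a mat22" where
  "lower x = Mat22 1 0 x 1"

definition diag :: "'a::comm_ring_1 \<Rightarrow> 'a \<Rightarrow> 'a mat22" where
  "diag x y = Mat22 x 0 0 y"

definition weyl :: "'a::comm_ring_1 mat22" where
  "weyl = Mat22 0 (- 1) 1 0"

definition lconj :: "'a::comm_ring_1 \<Rightarrow> 'a mat22 \<Rightarrow> 'a mat22" where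
  "lconj s X = lower s * X * lower (- s)"

lemma upper_mult: "upper x * upper y = upper (x + y)"
  by (simp add: upper_def)

lemma lower_mult: "lower x * lower y = lower (x + y)"
  by (simp add: lower_def add.commute)

lemma upper_power: "upper x ^ n = upper (of_nat n * x)"
  by (induction n) (simp_all add: upper_def one_mat22_def algebra_simps)

lemma lower_power: "lower x ^ n = lower (of_nat n * x)"
  by (induction n) (simp_all add: lower_def one_mat22_def algebra_simps)

lemma mat_modeq_upper: "modeq e x y \<Longrightarrow> mat_modeq e (upper x) (upper y)"
  by (simp add: upper_def)

lemma mat_modeq_lower: "modeq e x y \<Longrightarrow> mat_modeq e (lower x) (lower y)"
  by (simp add: lower_def)

lemma lconj_mult: "lconj s (X * Y) = lconj s X * lconj s Y"
proof -
  have "lower (- s) * lower s = 1"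
    by (simp add: lower_mult lower_def one_mat22_def)
  then show ?thesis
    unfolding lconj_def by (simp add: mult.assoc) (metis mult.assoc mult_1)
qed

lemma lconj_power: "lconj s (X ^ n) = lconj s X ^ n"
proof (induction n)
  case 0
  show ?case by (simp add: lconj_def lower_mult lower_def one_mat22_def)
next
  case (Suc n)
  then show ?case by (simp add: lconj_mult)
qed

lemma lconj_lower: "lconj s (lower x) = lower x"
  by (simp add: lconj_def lower_mult)

lemma lconj_diag: "lconj s (diag x y) = Mat22 x 0 (s * (x - y)) y"
  by (simp add: lconj_def lower_def diag_def algebra_simps)

lemma mat_modeq_lconj: "mat_modeq e X Y \<Longrightarrow> mat_modeq e (lconj s X) (lconj s Y)"
  unfolding lconj_def by (intro mat_modeq_mult mat_modeq_refl)

lemma weyl_eq: "upper (- 1) * lower 1 * upper (- 1) = weyl"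
  by (simp add: upper_def lower_def weyl_def)

lemma upper_eq_weyl_conj: "upper (- z) = upper 1 * lower (- 1) * upper 1 * lower z * weyl"
  by (simp add: upper_def lower_def weyl_def)

lemma diag_modeq_upper_lower:
  assumes "modeq e (u * v) 1"
  shows "mat_modeq e (diag u v) (upper u * lower (- v) * upper u * weyl)"
proof -
  have product: "upper u * lower (- v) * upper u * weyl = Mat22 (u * (2 - u * v)) (u * v - 1) (1 - u * v) v"
    by (simp add: upper_def lower_def weyl_def algebra_simps)
  have "modeq e (u * (2 - u * v)) (u * (2 - 1))"
    by (intro modeq_mult modeq_diff assms modeq_refl)
  moreover have "modeq e (u * v - 1) 0" "modeq e (1 - u * v) 0"
    using modeq_diff[OF assms modeq_refl, of 1] modeq_diff[OF modeq_refl assms, of 1] by simp_all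
  ultimately show ?thesis
    unfolding product by (simp add: diag_def modeq_sym)
qed

text \<open>Modulo e the three diagonal parts cancel, and only the off-diagonal entry created by
  conjugating with lower s survives.\<close>
lemma lower_modeq_commutator:
  assumes a: "modeq e (a * a') 1" and b: "modeq e (b * b') 1"
  shows "mat_modeq e (lower (s * (a * a - b * b)))
           (diag a' a * lconj s (diag (b' * a) (b * a')) * diag (b * a' * a) (b' * a * a'))"
proof -
  let ?k = "(a * a') * (a * a') * (b * b')"
  have "diag a' a * lconj s (diag (b' * a) (b * a')) * diag (b * a' * a) (b' * a * a') =
      Mat22 ?k 0 (s * ((a * a') * (b * b') * a * a - (a * a') * (a * a') * b * b)) ?k"
    unfolding lconj_diag by (simp add: diag_def algebra_simps)
  moreover have "modeq e ?k (1 * 1 * 1)"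
    by (intro modeq_mult a b)
  moreover have "modeq e (s * ((a * a') * (b * b') * a * a - (a * a') * (a * a') * b * b))
      (s * (1 * 1 * a * a - 1 * 1 * b * b))"
    by (intro modeq_mult modeq_diff a b modeq_refl)
  ultimately show ?thesis
    by (simp add: lower_def modeq_sym)
qed

lemma lower_diag_upper_modeq:
  assumes det: "a * d - b * c = 1" and inv: "modeq e (a * v) 1"
  shows "mat_modeq e (Mat22 a b c d) (lower (c * v) * diag a v * upper (v * b))"
proof -
  have "lower (c * v) * diag a v * upper (v * b) = Mat22 a ((a * v) * b) (c * (a * v)) (b * c * (a * v) * v + v)"
    by (simp add: lower_def diag_def upper_def algebra_simps)
  moreover have "modeq e b ((a * v) * b)" "modeq e c (c * (a * v))"
    using modeq_mult[OF inv modeq_refl, of b] modeq_mult[OF modeq_refl inv, of c]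
    by (simp_all add: modeq_sym)
  moreover have "modeq e d (b * c * (a * v) * v + v)"
  proof -
    have "a * d = 1 + b * c"
      using det by (simp add: algebra_simps)
    then have "d * (a * v) = b * c * v + v"
      by (metis distrib_right mult.assoc mult.commute mult.left_neutral add.commute)
    moreover have "modeq e (d * (a * v)) d"
      using modeq_mult[OF modeq_refl inv, of d] by simp
    moreover have "modeq e (b * c * (a * v) * v + v) (b * c * 1 * v + v)"
      by (intro modeq_add modeq_mult inv modeq_refl)
    ultimately show ?thesis
      by (metis modeq_sym modeq_trans mult_1_right)
  qed
  ultimately show ?thesis
    by simp
qed

datatype zsqrt2 = Zs int int

instantiation zsqrt2 :: comm_ring_1
begin

fun plus_zsqrt2 :: "zsqrt2 \<Rightarrow> zsqrt2 \<Rightarrow> zsqrt2" where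
  "plus_zsqrt2 (Zs a b) (Zs c d) = Zs (a + c) (b + d)"

fun minus_zsqrt2 :: "zsqrt2 \<Rightarrow> zsqrt2 \<Rightarrow> zsqrt2" where
  "minus_zsqrt2 (Zs a b) (Zs c d) = Zs (a - c) (b - d)"

fun uminus_zsqrt2 :: "zsqrt2 \<Rightarrow> zsqrt2" where
  "uminus_zsqrt2 (Zs a b) = Zs (- a) (- b)"

fun times_zsqrt2 :: "zsqrt2 \<Rightarrow> zsqrt2 \<Rightarrow> zsqrt2" where
  "times_zsqrt2 (Zs a b) (Zs c d) = Zs (a * c - 2 * b * d) (a * d + b * c)"

definition zero_zsqrt2 :: zsqrt2 where
  "zero_zsqrt2 = Zs 0 0"

definition one_zsqrt2 :: zsqrt2 where
  "one_zsqrt2 = Zs 1 0"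

instance
proof
  fix x y z :: zsqrt2
  show "x * y * z = x * (y * z)" "(x + y) * z = x * z + y * z"
    by (cases x; cases y; cases z; simp add: algebra_simps)+
  show "x + y + z = x + (y + z)"
    by (cases x; cases y; cases z) simp
  show "x * y = y * x" "x + y = y + x" "x - y = x + - y"
    by (cases x; cases y; simp add: algebra_simps)+
  show "1 * x = x" "0 + x = x" "- x + x = 0"
    by (cases x; simp add: one_zsqrt2_def zero_zsqrt2_def)+
  show "(0::zsqrt2) \<noteq> 1"
    by (simp add: zero_zsqrt2_def one_zsqrt2_def)
qed

end

definition sqrt_m2 :: zsqrt2 where
  "sqrt_m2 = Zs 0 1"

fun znorm :: "zsqrt2 \<Rightarrow> int" where
  "znorm (Zs a b) = a\<^sup>2 + 2 * b\<^sup>2"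

fun zcnj :: "zsqrt2 \<Rightarrow> zsqrt2" where
  "zcnj (Zs a b) = Zs a (- b)"

lemma of_int_Zs: "of_int k = Zs k 0"
  by (induction k rule: int_induct[where k = 0]) (simp_all add: zero_zsqrt2_def one_zsqrt2_def)

lemma numeral_Zs: "numeral n = Zs (numeral n) 0"
  using of_int_Zs[of "numeral n"] by simp

lemma Zs_eq: "Zs a b = of_int a + sqrt_m2 * of_int b"
  by (simp add: of_int_Zs sqrt_m2_def)

lemma of_int_dvd_Zs_iff: "of_int p dvd Zs a b \<longleftrightarrow> p dvd a \<and> p dvd b"
proof
  assume "of_int p dvd Zs a b"
  then obtain k0 k1 where "Zs a b = Zs p 0 * Zs k0 k1"
    unfolding of_int_Zs by (metis dvdE zsqrt2.exhaust)
  then show "p dvd a \<and> p dvd b"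
    by simp
next
  assume "p dvd a \<and> p dvd b"
  then obtain k0 k1 where "a = p * k0" "b = p * k1"
    by (auto elim!: dvdE)
  then have "Zs a b = of_int p * Zs k0 k1"
    by (simp add: of_int_Zs)
  then show "of_int p dvd Zs a b"
    by simp
qed

lemma modeq_of_int_iff: "modeq (of_int p) (of_int x :: zsqrt2) (of_int y) \<longleftrightarrow> modeq p x y"
  by (simp add: modeq_def of_int_Zs of_int_dvd_Zs_iff[unfolded of_int_Zs] flip: of_int_diff)

lemma mult_zcnj: "x * zcnj x = of_int (znorm x)"
  by (cases x) (simp add: of_int_Zs power2_eq_square)

lemma znorm_mult: "znorm (x * y) = znorm x * znorm y"
  by (cases x; cases y) (simp add: power2_eq_square algebra_simps)

lemma modeq_zcnj: "modeq (of_int p) x y \<Longrightarrow> modeq (of_int p) (zcnj x) (zcnj y)"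
  by (cases x; cases y) (simp add: modeq_def of_int_dvd_Zs_iff, metis dvd_minus_iff minus_diff_eq)

lemma modeq_znorm: "modeq (of_int p) x y \<Longrightarrow> modeq p (znorm x) (znorm y)"
  by (metis modeq_of_int_iff modeq_mult modeq_zcnj mult_zcnj)

lemma dvd_Zs_if_dvd_znorm:
  fixes p :: int
  assumes "prime p" "\<not> p dvd 2" "p dvd znorm (Zs u v)" "p dvd u"
  shows "of_int p dvd Zs u v"
proof -
  have "p dvd 2 * v\<^sup>2"
    using assms(3,4) by (simp add: dvd_add_right_iff power2_eq_square)
  then have "p dvd v"
    using assms(1,2) by (simp add: prime_dvd_mult_iff prime_dvd_power_iff)
  with assms(4) show ?thesis
    by (simp add: of_int_dvd_Zs_iff)
qed

text \<open>N(a + t c) = N(a) + 2 t u + t^2 N(c), where u is the rational part of w = a * conj(c).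
  If p divided this for t = 0, 1, 2, then p would divide N(c) and u, hence w; so p would divide
  conj(c) = w d - N(c) b, making a d = 1 + b c congruent to 1 modulo p, against p | N(a).\<close>
lemma not_dvd_znorm_shift:
  fixes p :: int and a b c d :: zsqrt2
  assumes p: "prime p" "\<not> p dvd 2" and det: "a * d - b * c = 1"
  shows "\<exists>t\<in>{0, 1, 2}. \<not> p dvd znorm (a + of_int t * c)"
proof (rule ccontr)
  assume "\<not> ?thesis"
  then have shifts: "p dvd znorm (a + of_int t * c)" if "t \<in> {0, 1, 2}" for t
    using that by blast
  obtain a0 a1 c0 c1 where ac: "a = Zs a0 a1" "c = Zs c0 c1"
    by (meson zsqrt2.exhaust)
  define w where "w = a * zcnj c"
  obtain u v where w: "w = Zs u v"
    by (meson zsqrt2.exhaust)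
  have u: "u = a0 * c0 + 2 * a1 * c1"
    using w unfolding w_def ac by simp
  have expand: "znorm (a + of_int t * c) = znorm a + 2 * t * u + t\<^sup>2 * znorm c" for t
    unfolding ac u by (simp add: of_int_Zs power2_eq_square algebra_simps)
  have s0: "p dvd znorm a" and s1: "p dvd znorm a + 2 * u + znorm c"
    and s2: "p dvd znorm a + 4 * u + 4 * znorm c"
    using shifts[of 0, unfolded expand] shifts[of 1, unfolded expand] shifts[of 2, unfolded expand]
    by simp_all
  have "p dvd 2 * znorm c"
    using dvd_add[OF dvd_diff[OF s2 dvd_mult[OF s1, of 2]] s0] by (simp add: algebra_simps)
  then have pc: "p dvd znorm c"
    using p by (simp add: prime_dvd_mult_iff)
  have "p dvd 2 * u"
    using dvd_diff[OF dvd_diff[OF s1 s0] pc] by simp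
  then have "p dvd u"
    using p by (simp add: prime_dvd_mult_iff)
  moreover have "p dvd znorm w"
    unfolding w_def znorm_mult by (simp add: s0)
  ultimately have pw: "of_int p dvd w"
    using dvd_Zs_if_dvd_znorm[OF p] w by simp
  have "zcnj c = zcnj c * (a * d - b * c)"
    using det by simp
  also have "\<dots> = w * d - of_int (znorm c) * b"
    unfolding w_def by (simp add: algebra_simps flip: mult_zcnj)
  finally have "of_int p dvd zcnj c"
    using dvd_diff[OF dvd_mult2[OF pw] dvd_mult2[OF of_int_dvd_of_int[OF pc]]] by simp
  then have "of_int p dvd b * c"
    using ac by (simp add: of_int_dvd_Zs_iff)
  moreover have "a * d - 1 = b * c"
    using det by (simp add: algebra_simps)
  ultimately have "modeq (of_int p) (a * d) 1"
    by (simp add: modeq_def)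
  then have "modeq p (znorm (a * d)) (znorm 1)"
    by (rule modeq_znorm)
  then have "p dvd znorm a * znorm d - 1"
    by (simp add: modeq_def znorm_mult one_zsqrt2_def)
  then have "p dvd znorm a * znorm d - (znorm a * znorm d - 1)"
    using dvd_diff[OF dvd_mult2[OF s0]] by blast
  with p show False
    using not_prime_unit by force
qed

definition to_zs :: "zs2 \<Rightarrow> zsqrt2" where
  "to_zs x = Zs (fst x) (snd x)"

fun to_mat22 :: "mat2 \<Rightarrow> zsqrt2 mat22" where
  "to_mat22 (Mat a b c d) = Mat22 (to_zs a) (to_zs b) (to_zs c) (to_zs d)"

lemma to_zs_inject: "to_zs x = to_zs y \<longleftrightarrow> x = y"
  by (cases x; cases y) (simp add: to_zs_def)

lemma to_mat22_inject: "to_mat22 X = to_mat22 Y \<longleftrightarrow> X = Y"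
  by (cases X; cases Y) (simp add: to_zs_inject)

lemma to_mat22_mmul: "to_mat22 (mmul X Y) = to_mat22 X * to_mat22 Y"
  by (cases X; cases Y) (simp add: to_zs_def zadd_def zmul_def)

lemma to_mat22_minv: "to_mat22 (minv X) = adj2 (to_mat22 X)"
  by (cases X) (simp add: to_zs_def zneg_def)

lemma to_mat22_mI: "to_mat22 mI = 1"
  by (simp add: mI_def to_zs_def one_mat22_def one_zsqrt2_def zero_zsqrt2_def)

lemma mmul_assoc: "mmul (mmul X Y) Z = mmul X (mmul Y Z)"
  by (simp flip: to_mat22_inject add: to_mat22_mmul mult.assoc)

lemma mI_mmul [simp]: "mmul mI X = X"
  by (simp flip: to_mat22_inject add: to_mat22_mmul to_mat22_mI)

lemma mmul_mI [simp]: "mmul X mI = X"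
  by (simp flip: to_mat22_inject add: to_mat22_mmul to_mat22_mI)

lemma minv_minv [simp]: "minv (minv X) = X"
  by (simp flip: to_mat22_inject add: to_mat22_minv)

lemma minv_mmul: "minv (mmul X Y) = mmul (minv Y) (minv X)"
  by (simp flip: to_mat22_inject add: to_mat22_mmul to_mat22_minv adj2_mult)

lemma to_mat22_mred_eq:
  assumes "mat_modeq (of_int q) (to_mat22 X) (to_mat22 Y)"
  shows "mred q X = mred q Y"
proof -
  have "zred q x = zred q y" if "modeq (of_int q) (to_zs x) (to_zs y)" for x y
    using that by (simp add: modeq_def to_zs_def zred_def of_int_dvd_Zs_iff mod_eq_dvd_iff)
  with assms show ?thesis
    by (cases X; cases Y) simp
qed

lemma gen_mult: "x \<in> gen S \<Longrightarrow> y \<in> gen S \<Longrightarrow> mmul x y \<in> gen S"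
  by (induction x rule: gen.induct) (auto simp: mmul_assoc intro: gen.intros)

lemma gen_base: "s \<in> S \<Longrightarrow> s \<in> gen S"
  using gen_mul[OF _ gen_one, of s S] by simp

lemma gen_base_minv: "s \<in> S \<Longrightarrow> minv s \<in> gen S"
  using gen_inv[OF _ gen_one, of s S] by simp

lemma gen_minv: "x \<in> gen S \<Longrightarrow> minv x \<in> gen S"
proof (induction x rule: gen.induct)
  case gen_one
  show ?case
    using gen.gen_one by (simp add: mI_def zneg_def)
next
  case (gen_mul s x)
  then show ?case
    by (simp add: minv_mmul gen_mult gen_base_minv)
next
  case (gen_inv s x)
  then show ?case
    by (simp add: minv_mmul gen_mult gen_base)
qed

lemma gen_subset: "S \<subseteq> gen T \<Longrightarrow> gen S \<subseteq> gen T"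
proof
  fix x
  assume "S \<subseteq> gen T" "x \<in> gen S"
  then show "x \<in> gen T"
    by (induction rule: gen.induct[OF \<open>x \<in> gen S\<close>]) (auto intro: gen.gen_one gen_mult gen_minv)
qed

lemma det2_gen:
  "x \<in> gen S \<Longrightarrow> (\<And>s. s \<in> S \<Longrightarrow> det2 (to_mat22 s) = 1) \<Longrightarrow> det2 (to_mat22 x) = 1"
  by (induction x rule: gen.induct) (auto simp: to_mat22_mmul to_mat22_minv det2_mult det2_adj2 to_mat22_mI)

lemma gen_power: "s \<in> gen S \<Longrightarrow> \<exists>g\<in>gen S. to_mat22 g = to_mat22 s ^ n"
proof (induction n)
  case 0
  show ?case
    using gen.gen_one to_mat22_mI by auto
next
  case (Suc n)
  then show ?case
    by (metis gen_mult power_Suc to_mat22_mmul)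
qed

lemma Gamma_det: "G \<in> Gamma \<Longrightarrow> det2 (to_mat22 G) = 1"
  unfolding Gamma_def
  by (erule det2_gen)
    (auto simp: M1_def M2_def M3_def M4_def M5_def M6_def M7_def to_zs_def one_zsqrt2_def)

lemma Gamma_C3_subset: "Gamma_C3 \<subseteq> Gamma"
  unfolding Gamma_C3_def Gamma_def by (rule gen_subset) (auto intro: gen_base)

lemma Gamma_C1_subset: "Gamma_C1 \<subseteq> Gamma"
  unfolding Gamma_C1_def Gamma_def by (rule gen_subset) (auto intro: gen_base)

lemma Gamma_C3'_subset: "Gamma_C3' \<subseteq> Gamma"
  unfolding Gamma_C3'_def Gamma_def by (rule gen_subset) (auto intro: gen_mult gen_base gen_base_minv)

lemma blocks_subset_Gamma: "blocks k \<subseteq> Gamma"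
proof (induction k)
  case 0
  show ?case
    by (simp add: Gamma_def gen.gen_one)
next
  case (Suc k)
  then show ?case
    using Gamma_C3_subset Gamma_C1_subset Gamma_C3'_subset by (auto simp: Gamma_def intro!: gen_mult)
qed

lemma blocks_SucI:
  "g \<in> Gamma_C3 \<Longrightarrow> h \<in> Gamma_C1 \<Longrightarrow> j \<in> Gamma_C3' \<Longrightarrow> x \<in> blocks k
    \<Longrightarrow> mmul (mmul (mmul g h) j) x \<in> blocks (Suc k)"
  by auto

lemma blocks_Suc: "x \<in> blocks k \<Longrightarrow> x \<in> blocks (Suc k)"
  using blocks_SucI[of mI mI mI] gen.gen_one
  by (simp add: Gamma_C3_def Gamma_C1_def Gamma_C3'_def)

lemma blocks_mono: "k \<le> l \<Longrightarrow> blocks k \<subseteq> blocks l"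
  by (induction l rule: dec_induct) (auto simp del: blocks.simps intro: blocks_Suc)

lemma blocks_mult: "x \<in> blocks k \<Longrightarrow> y \<in> blocks l \<Longrightarrow> mmul x y \<in> blocks (k + l)"
proof (induction k arbitrary: x)
  case 0
  then show ?case by simp
next
  case (Suc k)
  then obtain g h j z where "x = mmul (mmul (mmul g h) j) z"
    and "g \<in> Gamma_C3" "h \<in> Gamma_C1" "j \<in> Gamma_C3'" "z \<in> blocks k"
    by auto
  with Suc.IH[of z] Suc.prems(2) show ?case
    by (simp only: mmul_assoc add_Suc) (blast intro: blocks_SucI[simplified mmul_assoc])
qed

lemma Gamma_C3_subset_blocks: "Gamma_C3 \<subseteq> blocks 1"
  using blocks_SucI[of _ mI mI mI 0] gen.gen_one
  by (auto simp: Gamma_C1_def Gamma_C3'_def)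

lemma Gamma_C1_subset_blocks: "Gamma_C1 \<subseteq> blocks 1"
  using blocks_SucI[of mI _ mI mI 0] gen.gen_one
  by (auto simp: Gamma_C3_def Gamma_C3'_def)

definition mod_image :: "int \<Rightarrow> mat2 set \<Rightarrow> zsqrt2 mat22 set" where
  "mod_image q H = {X. \<exists>h\<in>H. mat_modeq (of_int q) X (to_mat22 h)}"

lemma mod_image_mult:
  assumes "\<And>x y. x \<in> H \<Longrightarrow> y \<in> K \<Longrightarrow> mmul x y \<in> L"
    and "X \<in> mod_image q H" "Y \<in> mod_image q K"
  shows "X * Y \<in> mod_image q L"
proof -
  obtain x y where "x \<in> H" "y \<in> K"
    and "mat_modeq (of_int q) X (to_mat22 x)" "mat_modeq (of_int q) Y (to_mat22 y)"
    using assms(2,3) unfolding mod_image_def by blast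
  then have "mat_modeq (of_int q) (X * Y) (to_mat22 (mmul x y))"
    unfolding to_mat22_mmul by (blast intro: mat_modeq_mult)
  with assms(1) \<open>x \<in> H\<close> \<open>y \<in> K\<close> show ?thesis
    unfolding mod_image_def by blast
qed

lemma mod_image_gen_mult:
  "X \<in> mod_image q (gen S) \<Longrightarrow> Y \<in> mod_image q (gen S) \<Longrightarrow> X * Y \<in> mod_image q (gen S)"
  by (rule mod_image_mult[OF gen_mult])

lemma mod_image_blocks_mult:
  "X \<in> mod_image q (blocks k) \<Longrightarrow> Y \<in> mod_image q (blocks l) \<Longrightarrow> X * Y \<in> mod_image q (blocks (k + l))"
  by (rule mod_image_mult[OF blocks_mult])

lemma mod_image_mono: "H \<subseteq> K \<Longrightarrow> mod_image q H \<subseteq> mod_image q K"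
  unfolding mod_image_def by blast

lemma mod_image_modeq: "mat_modeq (of_int q) X Y \<Longrightarrow> Y \<in> mod_image q H \<Longrightarrow> X \<in> mod_image q H"
  unfolding mod_image_def using mat_modeq_trans by blast

lemma A_eq_Gamma_quot:
  assumes "\<And>G. G \<in> Gamma \<Longrightarrow> to_mat22 G \<in> mod_image q (blocks k)"
  shows "A k q = Gamma_quot q"
proof
  show "A k q \<subseteq> Gamma_quot q"
    unfolding A_def Gamma_quot_def using blocks_subset_Gamma by blast
  show "Gamma_quot q \<subseteq> A k q"
    unfolding A_def Gamma_quot_def
    using assms to_mat22_mred_eq unfolding mod_image_def by blast
qed

lemma to_mat22_M3: "to_mat22 M3 = lower (of_int (- 4))"
  by (simp add: M3_def lower_def to_zs_def numeral_Zs one_zsqrt2_def zero_zsqrt2_def)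

lemma lower_4_in_Gamma_C3: "\<exists>g\<in>Gamma_C3. to_mat22 g = lower (of_int (- 4))"
  using gen_base[of M3 "{M1, M3, M5}"] to_mat22_M3 by (auto simp: Gamma_C3_def)

lemma lower_4_in_Gamma_C1: "\<exists>g\<in>Gamma_C1. to_mat22 g = lower (of_int (- 4))"
  using gen_base[of M3 "{M2, M3, M6}"] to_mat22_M3 by (auto simp: Gamma_C1_def)

lemma upper_8_in_Gamma_C3: "\<exists>g\<in>Gamma_C3. to_mat22 g = upper (of_int 8)"
proof
  let ?g = "mmul (minv M5) (mmul M1 (mmul (minv M5) M1))"
  show "?g \<in> Gamma_C3"
    unfolding Gamma_C3_def by (intro gen_mult gen_base gen_base_minv) auto
  show "to_mat22 ?g = upper (of_int 8)"
    by (simp add: M1_def M5_def upper_def to_zs_def zadd_def zmul_def zneg_def numeral_Zs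
        one_zsqrt2_def zero_zsqrt2_def)
qed

lemma lconj_upper_8_in_Gamma_C1: "\<exists>g\<in>Gamma_C1. to_mat22 g = lconj sqrt_m2 (upper (of_int 8))"
proof
  let ?g = "mmul (minv M6) (mmul M2 (mmul (minv M6) M2))"
  show "?g \<in> Gamma_C1"
    unfolding Gamma_C1_def by (intro gen_mult gen_base gen_base_minv) auto
  show "to_mat22 ?g = lconj sqrt_m2 (upper (of_int 8))"
    by (simp add: M2_def M6_def lconj_def upper_def lower_def sqrt_m2_def to_zs_def zadd_def
        zmul_def zneg_def numeral_Zs one_zsqrt2_def zero_zsqrt2_def)
qed

lemma coprime_iff_modeq_invertible:
  fixes a q :: int
  shows "coprime a q \<longleftrightarrow> (\<exists>b. modeq q (a * b) 1)"
  by (simp add: modeq_def coprime_iff_invertible_int cong_iff_dvd_diff)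

lemma modeq_nat_multiple:
  fixes q c t :: int
  assumes "q > 0" "coprime c q"
  shows "\<exists>n::nat. modeq q (int n * c) t"
proof -
  obtain b where b: "modeq q (c * b) 1"
    using assms(2) coprime_iff_modeq_invertible by blast
  define n where "n = nat ((t * b) mod q)"
  have "int n = (t * b) mod q"
    using assms(1) by (simp add: n_def)
  then have "modeq q (int n) (t * b)"
    by (simp add: modeq_def flip: mod_eq_dvd_iff)
  then have "modeq q (int n * c) (t * (c * b))"
    using modeq_mult[OF _ modeq_refl, of q "int n" "t * b" c] by (simp add: algebra_simps)
  also have "modeq q (t * (c * b)) (t * 1)"
    by (intro modeq_mult modeq_refl b)
  finally show ?thesis
    by auto
qed

text \<open>As c is a unit modulo q, every t is congruent to n c for some natural number n,
  and F (n c) is the n-th power of the generator F c.\<close>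
lemma one_parameter_mod_image:
  assumes "q > 0" "coprime c q"
    and gen: "\<exists>g\<in>gen S. to_mat22 g = F (of_int c)"
    and power: "\<And>x n. F x ^ n = F (of_nat n * x)"
    and cong: "\<And>x y. modeq (of_int q) x y \<Longrightarrow> mat_modeq (of_int q) (F x) (F y)"
  shows "F (of_int t) \<in> mod_image q (gen S)"
proof -
  obtain n :: nat where "modeq q (int n * c) t"
    using modeq_nat_multiple[OF assms(1,2)] by blast
  then have "mat_modeq (of_int q) (F (of_int t)) (F (of_nat n * of_int c))"
    by (intro cong) (metis modeq_of_int modeq_sym of_int_mult of_int_of_nat_eq)
  moreover obtain g where "g \<in> gen S" "to_mat22 g = F (of_nat n * of_int c)"
    using gen gen_power power by metis
  ultimately show ?thesis
    unfolding mod_image_def by (metis (mono_tags, lifting) mem_Collect_eq)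
qed

lemma mod_image_Gamma_C3_mult:
  "X \<in> mod_image q Gamma_C3 \<Longrightarrow> Y \<in> mod_image q Gamma_C3 \<Longrightarrow> X * Y \<in> mod_image q Gamma_C3"
  unfolding Gamma_C3_def by (rule mod_image_gen_mult)

lemma mod_image_Gamma_C1_mult:
  "X \<in> mod_image q Gamma_C1 \<Longrightarrow> Y \<in> mod_image q Gamma_C1 \<Longrightarrow> X * Y \<in> mod_image q Gamma_C1"
  unfolding Gamma_C1_def by (rule mod_image_gen_mult)

lemma Gamma_C3_in_blocks_1: "X \<in> mod_image q Gamma_C3 \<Longrightarrow> X \<in> mod_image q (blocks 1)"
  using mod_image_mono[OF Gamma_C3_subset_blocks] by blast

lemma Gamma_C1_in_blocks_1: "X \<in> mod_image q Gamma_C1 \<Longrightarrow> X \<in> mod_image q (blocks 1)"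
  using mod_image_mono[OF Gamma_C1_subset_blocks] by blast

locale odd_modulus =
  fixes q :: int
  assumes q_pos: "q > 0" and coprime_2: "coprime 2 q"
begin

lemma coprime_8: "coprime 8 q"
  using coprime_2 coprime_power_left_iff[of 2 3 q] by simp

lemma coprime_minus_4: "coprime (- 4) q"
  using coprime_2 coprime_power_left_iff[of 2 2 q] by simp

lemma upper_in_Gamma_C3: "upper (of_int t) \<in> mod_image q Gamma_C3"
  using one_parameter_mod_image[OF q_pos coprime_8, of _ upper]
    upper_8_in_Gamma_C3 upper_power mat_modeq_upper
  unfolding Gamma_C3_def by blast

lemma lower_in_Gamma_C3: "lower (of_int t) \<in> mod_image q Gamma_C3"
  using one_parameter_mod_image[OF q_pos coprime_minus_4, of _ lower]
    lower_4_in_Gamma_C3 lower_power mat_modeq_lower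
  unfolding Gamma_C3_def by blast

lemma lower_in_Gamma_C1: "lower (of_int t) \<in> mod_image q Gamma_C1"
  using one_parameter_mod_image[OF q_pos coprime_minus_4, of _ lower]
    lower_4_in_Gamma_C1 lower_power mat_modeq_lower
  unfolding Gamma_C1_def by blast

lemma lconj_upper_in_Gamma_C1: "lconj sqrt_m2 (upper (of_int t)) \<in> mod_image q Gamma_C1"
proof -
  have "lconj sqrt_m2 (upper x) ^ n = lconj sqrt_m2 (upper (of_nat n * x))" for x n
    by (simp add: upper_power flip: lconj_power)
  then show ?thesis
    using one_parameter_mod_image[OF q_pos coprime_8, of _ "\<lambda>x. lconj sqrt_m2 (upper x)"]
      lconj_upper_8_in_Gamma_C1 mat_modeq_lconj mat_modeq_upper
    unfolding Gamma_C1_def by blast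
qed

lemma weyl_in_Gamma_C3: "weyl \<in> mod_image q Gamma_C3"
  using upper_in_Gamma_C3[of "- 1"] lower_in_Gamma_C3[of 1]
  by (simp add: mod_image_Gamma_C3_mult flip: weyl_eq)

lemma lconj_weyl_in_Gamma_C1: "lconj sqrt_m2 weyl \<in> mod_image q Gamma_C1"
  using lconj_upper_in_Gamma_C1[of "- 1"] lower_in_Gamma_C1[of 1]
  by (simp add: mod_image_Gamma_C1_mult lconj_mult lconj_lower flip: weyl_eq)

lemma diag_in_Gamma_C3:
  assumes "modeq q (a * b) 1"
  shows "diag (of_int a) (of_int b) \<in> mod_image q Gamma_C3"
proof (rule mod_image_modeq)
  show "mat_modeq (of_int q) (diag (of_int a) (of_int b))
      (upper (of_int a) * lower (- of_int b) * upper (of_int a) * weyl)"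
    using modeq_of_int[OF assms] by (intro diag_modeq_upper_lower) simp
  show "upper (of_int a) * lower (- of_int b) * upper (of_int a) * weyl \<in> mod_image q Gamma_C3"
    using upper_in_Gamma_C3 lower_in_Gamma_C3[of "- b"] weyl_in_Gamma_C3
    by (simp add: mod_image_Gamma_C3_mult)
qed

lemma lconj_diag_in_Gamma_C1:
  assumes "modeq q (a * b) 1"
  shows "lconj sqrt_m2 (diag (of_int a) (of_int b)) \<in> mod_image q Gamma_C1"
proof (rule mod_image_modeq)
  show "mat_modeq (of_int q) (lconj sqrt_m2 (diag (of_int a) (of_int b)))
      (lconj sqrt_m2 (upper (of_int a) * lower (- of_int b) * upper (of_int a) * weyl))"
    using modeq_of_int[OF assms] by (intro mat_modeq_lconj diag_modeq_upper_lower) simp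
  show "lconj sqrt_m2 (upper (of_int a) * lower (- of_int b) * upper (of_int a) * weyl)
      \<in> mod_image q Gamma_C1"
    using lconj_upper_in_Gamma_C1 lower_in_Gamma_C1[of "- b"] lconj_weyl_in_Gamma_C1
    by (simp add: mod_image_Gamma_C1_mult lconj_mult lconj_lower)
qed

lemma lower_sqrt_m2_diff_squares_in_blocks_3:
  assumes "coprime a q" "coprime b q"
  shows "lower (sqrt_m2 * of_int (a * a - b * b)) \<in> mod_image q (blocks 3)"
proof -
  obtain a' b' where a': "modeq q (a * a') 1" and b': "modeq q (b * b') 1"
    using assms coprime_iff_modeq_invertible by blast
  have "modeq q (a' * a) 1"
    using a' by (simp add: mult.commute)
  moreover have "modeq q ((b' * a) * (b * a')) (1 * 1)" "modeq q ((b * a' * a) * (b' * a * a')) (1 * 1 * 1)"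
    using modeq_mult[OF a' b'] modeq_mult[OF modeq_mult[OF a' a'] b']
    by (simp_all add: algebra_simps)
  ultimately have "diag (of_int a') (of_int a) * lconj sqrt_m2 (diag (of_int (b' * a)) (of_int (b * a')))
      * diag (of_int (b * a' * a)) (of_int (b' * a * a')) \<in> mod_image q (blocks (1 + 1 + 1))"
    by (intro mod_image_blocks_mult Gamma_C3_in_blocks_1 Gamma_C1_in_blocks_1
        diag_in_Gamma_C3 lconj_diag_in_Gamma_C1) simp_all
  moreover have "mat_modeq (of_int q) (lower (sqrt_m2 * of_int (a * a - b * b)))
      (diag (of_int a') (of_int a) * lconj sqrt_m2 (diag (of_int (b' * a)) (of_int (b * a')))
        * diag (of_int (b * a' * a)) (of_int (b' * a * a')))"
    using lower_modeq_commutator[OF modeq_of_int[OF a', simplified] modeq_of_int[OF b', simplified], of sqrt_m2] by simp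
  ultimately show ?thesis
    by (simp add: mod_image_modeq numeral_3_eq_3)
qed

lemma lower_sqrt_m2_in_blocks_3:
  assumes "coprime (k + 1) q" "coprime (k - 1) q"
  shows "lower (sqrt_m2 * of_int k) \<in> mod_image q (blocks 3)"
proof -
  obtain h where h: "modeq q (2 * h) 1"
    using coprime_2 coprime_iff_modeq_invertible by blast
  then have "coprime h q"
    using coprime_iff_modeq_invertible by (metis mult.commute mult.left_commute)
  then have "lower (sqrt_m2 * of_int ((k + 1) * h * ((k + 1) * h) - (k - 1) * h * ((k - 1) * h)))
      \<in> mod_image q (blocks 3)"
    using assms by (intro lower_sqrt_m2_diff_squares_in_blocks_3) simp_all
  moreover have "modeq q k ((k + 1) * h * ((k + 1) * h) - (k - 1) * h * ((k - 1) * h))"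
  proof -
    have "modeq q (k * (2 * h) * (2 * h)) (k * 1 * 1)"
      by (intro modeq_mult modeq_refl h)
    then show ?thesis
      by (simp add: modeq_sym algebra_simps)
  qed
  ultimately show ?thesis
    by (elim mod_image_modeq[rotated]) (intro mat_modeq_lower modeq_mult modeq_refl modeq_of_int)
qed

end

lemma not_dvd_halved_pm1:
  fixes p k h e :: int
  assumes p: "\<not> p dvd 1" "\<not> p dvd 3" and h: "p dvd 2 * h - 1"
    and k: "p dvd k + 1 \<or> p dvd k - 1" and e: "e = 1 \<or> e = - 1"
  shows "\<not> p dvd k * h + e"
proof
  assume "p dvd k * h + e"
  then have "p dvd 2 * (k * h + e) - k * (2 * h - 1)"
    using h by (blast intro: dvd_diff dvd_mult)
  then have "p dvd k + 2 * e"
    by (simp add: algebra_simps)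
  with k have "p dvd (k + 2 * e) - (k + 1) \<or> p dvd (k + 2 * e) - (k - 1)"
    using dvd_diff by blast
  then have "p dvd 2 * e - 1 \<or> p dvd 2 * e + 1"
    by (simp add: algebra_simps)
  with e p show False
    by auto
qed

locale prime_power_modulus =
  fixes p q :: int and m :: nat
  assumes prime: "prime p" and p_ge_5: "p \<ge> 5" and q_eq: "q = p ^ m" and m_pos: "m \<ge> 1"
begin

lemma not_dvd_small: "\<not> p dvd 1" "\<not> p dvd 2" "\<not> p dvd 3"
  using p_ge_5 zdvd_imp_le[of p 1] zdvd_imp_le[of p 2] zdvd_imp_le[of p 3] by auto

lemma p_dvd_q: "p dvd q"
  using q_eq m_pos by (simp add: dvd_power)

lemma coprime_iff_not_dvd: "coprime x q \<longleftrightarrow> \<not> p dvd x"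
proof
  assume "coprime x q"
  then show "\<not> p dvd x"
    using p_dvd_q not_dvd_small(1) coprime_common_divisor by blast
next
  assume "\<not> p dvd x"
  then show "coprime x q"
    using prime prime_imp_power_coprime q_eq by blast
qed

sublocale odd_modulus q
proof
  show "q > 0"
    using q_eq p_ge_5 by simp
  show "coprime 2 q"
    using not_dvd_small(2) coprime_iff_not_dvd by blast
qed

lemma lower_sqrt_m2_in_blocks_6: "lower (sqrt_m2 * of_int k) \<in> mod_image q (blocks 6)"
proof (cases "p dvd k + 1 \<or> p dvd k - 1")
  case False
  then show ?thesis
    using lower_sqrt_m2_in_blocks_3 mod_image_mono[OF blocks_mono, of 3 6]
    by (auto simp: coprime_iff_not_dvd)
next
  case True
  txt \<open>Halve k: with 2 h = 1 modulo q, k = k h + k h, and k h is not +1 or -1 modulo p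
    because p divides neither 1 nor 3.\<close>
  obtain h where h: "modeq q (2 * h) 1"
    using coprime_2 coprime_iff_modeq_invertible by blast
  then have "p dvd 2 * h - 1"
    using p_dvd_q dvd_trans unfolding modeq_def by blast
  then have "\<not> p dvd k * h + 1" "\<not> p dvd k * h - 1"
    using not_dvd_halved_pm1[OF not_dvd_small(1,3) _ True, of h] by force+
  then have "lower (sqrt_m2 * of_int (k * h)) \<in> mod_image q (blocks 3)"
    by (intro lower_sqrt_m2_in_blocks_3) (simp_all add: coprime_iff_not_dvd)
  then have "lower (sqrt_m2 * of_int (k * h)) * lower (sqrt_m2 * of_int (k * h)) \<in> mod_image q (blocks 6)"
    using mod_image_blocks_mult[of _ q 3 _ 3] by simp
  moreover have "modeq q k (k * h + k * h)"
    using modeq_mult[OF modeq_refl h, of k] by (simp add: modeq_sym algebra_simps)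
  then have "mat_modeq (of_int q) (lower (sqrt_m2 * of_int k))
      (lower (sqrt_m2 * of_int (k * h)) * lower (sqrt_m2 * of_int (k * h)))"
    unfolding lower_mult distrib_left[symmetric] of_int_add[symmetric]
    by (intro mat_modeq_lower modeq_mult modeq_refl modeq_of_int)
  ultimately show ?thesis
    by (rule mod_image_modeq[rotated])
qed

lemma lower_in_blocks_7: "lower x \<in> mod_image q (blocks 7)"
proof -
  obtain x0 x1 where "x = of_int x0 + sqrt_m2 * of_int x1"
    by (metis Zs_eq zsqrt2.exhaust)
  then have "lower x = lower (of_int x0) * lower (sqrt_m2 * of_int x1)"
    by (simp add: lower_mult)
  then show ?thesis
    using mod_image_blocks_mult[OF Gamma_C3_in_blocks_1[OF lower_in_Gamma_C3] lower_sqrt_m2_in_blocks_6]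
    by simp
qed

lemma upper_in_blocks_9: "upper x \<in> mod_image q (blocks 9)"
proof -
  obtain x0 x1 where "x = of_int x0 + sqrt_m2 * of_int x1"
    by (metis Zs_eq zsqrt2.exhaust)
  then have x: "upper x =
      upper (of_int x0) * (upper 1 * lower (- 1) * upper 1 * lower (sqrt_m2 * of_int (- x1)) * weyl)"
    by (simp add: upper_mult flip: upper_eq_weyl_conj)
  have "upper 1 * lower (- 1) * upper 1 \<in> mod_image q Gamma_C3"
    using upper_in_Gamma_C3[of 1] lower_in_Gamma_C3[of "- 1"] by (simp add: mod_image_Gamma_C3_mult)
  then have "upper (of_int x0) * (upper 1 * lower (- 1) * upper 1 * lower (sqrt_m2 * of_int (- x1)) * weyl)
      \<in> mod_image q (blocks (1 + (1 + 6 + 1)))"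
    by (intro mod_image_blocks_mult Gamma_C3_in_blocks_1 upper_in_Gamma_C3 weyl_in_Gamma_C3
        lower_sqrt_m2_in_blocks_6)
  then show ?thesis
    unfolding x by simp
qed

lemma invertible_if_not_dvd_znorm:
  assumes "\<not> p dvd znorm u"
  obtains v where "modeq (of_int q) (u * v) 1"
proof -
  obtain n where "modeq q (znorm u * n) 1"
    using assms coprime_iff_not_dvd coprime_iff_modeq_invertible by blast
  then have "modeq (of_int q) (u * (zcnj u * of_int n)) 1"
    using modeq_of_int by (fastforce simp: mult.assoc[symmetric] mult_zcnj)
  then show ?thesis
    using that by blast
qed

lemma det2_one_in_blocks_43:
  assumes "det2 X = 1"
  shows "X \<in> mod_image q (blocks 43)"
proof -
  obtain a b c d where X: "X = Mat22 a b c d"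
    by (cases X)
  with assms have det: "a * d - b * c = 1"
    by simp
  obtain t where "\<not> p dvd znorm (a + of_int t * c)"
    using not_dvd_znorm_shift[OF prime not_dvd_small(2) det] by blast
  define a' b' where "a' = a + of_int t * c" and "b' = b + of_int t * d"
  obtain v where v: "modeq (of_int q) (a' * v) 1"
    using invertible_if_not_dvd_znorm \<open>\<not> p dvd znorm (a + of_int t * c)\<close> unfolding a'_def by blast
  have det': "a' * d - b' * c = 1"
    using det unfolding a'_def b'_def by (simp add: algebra_simps)
  let ?Y = "lower (c * v) * (upper a' * lower (- v) * upper a' * weyl) * upper (v * b')"
  have "X = upper (of_int (- t)) * Mat22 a' b' c d"
    unfolding X a'_def b'_def by (simp add: upper_def algebra_simps)
  moreover have "mat_modeq (of_int q) (Mat22 a' b' c d) ?Y"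
    using lower_diag_upper_modeq[OF det' v]
    by (rule mat_modeq_trans) (intro mat_modeq_mult mat_modeq_refl diag_modeq_upper_lower v)
  then have "mat_modeq (of_int q) (upper (of_int (- t)) * Mat22 a' b' c d) (upper (of_int (- t)) * ?Y)"
    by (intro mat_modeq_mult mat_modeq_refl)
  moreover have "upper (of_int (- t)) * ?Y \<in> mod_image q (blocks (1 + (7 + (9 + 7 + 9 + 1) + 9)))"
    by (intro mod_image_blocks_mult Gamma_C3_in_blocks_1 upper_in_Gamma_C3 weyl_in_Gamma_C3
        lower_in_blocks_7 upper_in_blocks_9)
  ultimately show ?thesis
    by (simp add: mod_image_modeq)
qed

end

theorem lemma2p3:
  fixes p :: int and m :: nat
  assumes "prime p" and "p \<ge> 5" and "m \<ge> 1"
  shows "A 54 (p ^ m) = Gamma_quot (p ^ m)"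
proof (rule A_eq_Gamma_quot)
  interpret prime_power_modulus p "p ^ m" m
    using assms by unfold_locales simp_all
  fix G
  assume "G \<in> Gamma"
  then show "to_mat22 G \<in> mod_image (p ^ m) (blocks 54)"
    using det2_one_in_blocks_43[OF Gamma_det] mod_image_mono[OF blocks_mono, of 43 54] by auto
qed

end
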